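(* Let $B,C$ be finite subsets of $I$. The following are equivalent: (1) there is a nonempty $A\in\mathcal{P}_{\mathrm{fci}}(I)$ with $l(A)=B$ and $r(A)=C$; (2) $B\neq\emptyset$, $\min(B\cup C)\subseteq B$, and one of the following holds: (a) $\max(B\cup C)\subseteq C$ and $\mathrm{ips}(B\cup C,C\setminus B)=B\setminus C$; (b) $\max(B\cup C)\subseteq B\setminus C$ and $\mathrm{ips}(B\cup C,C\setminus B)\cup\max(B\cup C)=B\setminus C$.
   Context: Let $I$ be a dense linear order with left endpoint $0$ and no right endpoint. Let $\mathcal{P}_{\mathrm{fci}}(I)$ be the set of finite unions of closed intervals $[i,j]$, $[i,+\infty)$, $(-\infty,j]$ of $I$. For $A\in\mathcal{P}_{\mathrm{fci}}(I)$, $l(A)$ and $r(A)$ are the sets of left and right endpoints of $A$. Left endpoints are the minima of the maximal closed intervals composing $A$, and right endpoints are the maxima of the bounded ones. For a nonempty finite set $X$, $\min(X)$ and $\max(X)$ are the singletons of its least and greatest element. For finite $X,Y$, $\mathrm{ips}(X,Y)=\{i\in X: s_X(i)\in Y\}$, where $s_X$ is the successor function of $X$ with the induced order. *)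

theory Defs
  imports Main
begin

text \<open>The ambient order I is a type of sort {dense_linorder, order_bot, no_top}:
a dense linear order with least element (bot, playing the role of 0) and no
greatest element.\<close>

definition cinterval :: "'a::linorder set \<Rightarrow> bool" where
  "cinterval K \<longleftrightarrow> (\<exists>i j. i \<le> j \<and> K = {i..j}) \<or> (\<exists>i. K = {i..}) \<or> (\<exists>j. K = {..j})"

definition fci :: "'a::linorder set \<Rightarrow> bool" where
  "fci A \<longleftrightarrow> (\<exists>F. finite F \<and> (\<forall>K\<in>F. cinterval K) \<and> A = \<Union>F)"

definition maxci :: "'a::linorder set \<Rightarrow> 'a set \<Rightarrow> bool" where
  "maxci A K \<longleftrightarrow> cinterval K \<and> K \<subseteq> A \<and>
     (\<forall>K'. cinterval K' \<and> K \<subseteq> K' \<and> K' \<subseteq> A \<longrightarrow> K' = K)"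

definition lend :: "'a::linorder set \<Rightarrow> 'a set" where
  "lend A = {i. \<exists>K. maxci A K \<and> i \<in> K \<and> (\<forall>x\<in>K. i \<le> x)}"

definition rend :: "'a::linorder set \<Rightarrow> 'a set" where
  "rend A = {j. \<exists>K. maxci A K \<and> j \<in> K \<and> (\<forall>x\<in>K. x \<le> j)}"

definition succ_in :: "'a::linorder set \<Rightarrow> 'a \<Rightarrow> 'a \<Rightarrow> bool" where
  "succ_in X i j \<longleftrightarrow> i \<in> X \<and> j \<in> X \<and> i < j \<and> (\<forall>k\<in>X. i < k \<longrightarrow> j \<le> k)"

definition ips :: "'a::linorder set \<Rightarrow> 'a set \<Rightarrow> 'a set" where
  "ips X Y = {i\<in>X. \<exists>j. succ_in X i j \<and> j \<in> Y}"

end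

theory Submission
  imports Defs
begin

text \<open>
  For a finite union A of closed intervals, l(A) and r(A) can be read off locally: a point of A is
  a left (right) endpoint iff no nondegenerate closed interval inside A ends (starts) at it, and
  every point of A lies between such a pair of endpoints, or above a left endpoint from which A
  is unbounded. Listing B \<union> C in increasing order, each component of A therefore starts at a
  point of B and either is a singleton (a point of B \<inter> C), or stops at the next point of
  B \<union> C, which must lie in C - B, or is unbounded, which only the last one can be. Conversely, for B and C satisfying (2) the union of these intervals has the
  prescribed endpoints; density of the order guarantees gaps between consecutive components.
\<close>

section \<open>Linear orders and their finite subsets\<close>

lemma atLeastAtMost_join_subset:
  fixes a b c :: "'a::linorder"
  shows "{a..b} \<subseteq> A \<Longrightarrow> {b..c} \<subseteq> A \<Longrightarrow> a \<le> b \<Longrightarrow> b \<le> c \<Longrightarrow> {a..c} \<subseteq> A"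
  by (metis Un_least ivl_disj_un_two_touch(4))

lemma finite_coinitial_ex_least:
  fixes S :: "'a::linorder set"
  assumes "finite E" "x \<in> S" "\<And>x. x \<in> S \<Longrightarrow> \<exists>e\<in>S \<inter> E. e \<le> x"
  shows "\<exists>m\<in>S. \<forall>x\<in>S. m \<le> x"
proof -
  have "S \<inter> E \<noteq> {}" "finite (S \<inter> E)"
    using assms by auto
  then show ?thesis
    using assms(3) by (meson Int_iff Min_in Min_le order.trans)
qed

lemma finite_cofinal_ex_greatest:
  fixes S :: "'a::linorder set"
  assumes "finite E" "x \<in> S" "\<And>x. x \<in> S \<Longrightarrow> \<exists>e\<in>S \<inter> E. x \<le> e"
  shows "\<exists>m\<in>S. \<forall>x\<in>S. x \<le> m"
proof -
  have "S \<inter> E \<noteq> {}" "finite (S \<inter> E)"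
    using assms by auto
  then show ?thesis
    using assms(3) by (meson Int_iff Max_in Max_ge order.trans)
qed

lemma finite_gap_below:
  fixes X :: "'a::dense_linorder set"
  assumes "finite X" "u < x"
  obtains z where "u < z" "z < x" "\<forall>k\<in>X. k < x \<longrightarrow> k < z"
proof -
  let ?m = "Max (insert u {k\<in>X. k < x})"
  have "finite (insert u {k\<in>X. k < x})"
    using assms(1) by simp
  then have "?m < x" "u \<le> ?m" "\<forall>k\<in>X. k < x \<longrightarrow> k \<le> ?m"
    using assms(2) by (simp_all add: Max_less_iff)
  moreover obtain z where "?m < z" "z < x"
    using dense[OF \<open>?m < x\<close>] by blast
  ultimately show ?thesis
    using that by (meson order.strict_trans1 order.strict_trans2)
qed

lemma finite_gap_above:
  fixes X :: "'a::dense_linorder set"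
  assumes "finite X" "j < v"
  obtains z where "j < z" "z < v" "\<forall>k\<in>X. j < k \<longrightarrow> z < k"
proof -
  let ?m = "Min (insert v {k\<in>X. j < k})"
  have "finite (insert v {k\<in>X. j < k})"
    using assms(1) by simp
  then have "j < ?m" "?m \<le> v" "\<forall>k\<in>X. j < k \<longrightarrow> ?m \<le> k"
    using assms(2) by (simp_all add: Min_gr_iff)
  moreover obtain z where "j < z" "z < ?m"
    using dense[OF \<open>j < ?m\<close>] by blast
  ultimately show ?thesis
    using that by (meson order.strict_trans1 order.strict_trans2)
qed

lemma ex_succ_in_pred:
  fixes X :: "'a::linorder set"
  assumes "finite X" "y \<in> X" "k \<in> X" "k < y"
  obtains p where "succ_in X p y"
proof -
  let ?p = "Max {k\<in>X. k < y}"
  have "finite {k\<in>X. k < y}" "{k\<in>X. k < y} \<noteq> {}"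
    using assms by auto
  then have "?p \<in> X" "?p < y" "\<forall>k\<in>X. k < y \<longrightarrow> k \<le> ?p"
    using Max_in[of "{k\<in>X. k < y}"] Max_ge[of "{k\<in>X. k < y}"] by auto
  with assms(2) have "succ_in X ?p y"
    unfolding succ_in_def by (meson leD not_le)
  then show ?thesis
    by (rule that)
qed

lemma Max_notin_ips:
  assumes "finite X"
  shows "Max X \<notin> ips X Y"
proof
  assume "Max X \<in> ips X Y"
  then obtain j where "j \<in> X" "Max X < j"
    by (auto simp: ips_def succ_in_def)
  with Max_ge[OF assms] show False
    by (meson leD)
qed

section \<open>Closed intervals and their finite unions\<close>

lemma cinterval_atLeastAtMost [simp]: "i \<le> j \<Longrightarrow> cinterval {i..j}"
  unfolding cinterval_def by blast

lemma cinterval_atLeast [simp]: "cinterval {i..}"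
  unfolding cinterval_def by blast

lemma cinterval_iff:
  fixes K :: "'a::{linorder, order_bot} set"
  shows "cinterval K \<longleftrightarrow> (\<exists>i j. i \<le> j \<and> K = {i..j}) \<or> (\<exists>i. K = {i..})"
proof -
  have "{..j} = {bot..j}" for j :: 'a
    by auto
  then show ?thesis
    unfolding cinterval_def by (metis bot_least)
qed

lemma cinterval_convex: "cinterval K \<Longrightarrow> x \<in> K \<Longrightarrow> y \<in> K \<Longrightarrow> {x..y} \<subseteq> K"
  unfolding cinterval_def by auto

lemma cinterval_extend_left:
  fixes K :: "'a::{linorder, order_bot} set"
  assumes "cinterval K" "i \<in> K" "\<forall>x\<in>K. i \<le> x" "u \<le> i"
  shows "cinterval ({u..i} \<union> K)"
proof -
  from assms(1) consider a b where "a \<le> b" "K = {a..b}" | a where "K = {a..}"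
    unfolding cinterval_iff by blast
  then show ?thesis
  proof cases
    case (1 a b)
    with assms(2,3) have "i = a"
      by (simp add: order.antisym)
    with 1 assms(4) have "{u..i} \<union> K = {u..b}"
      by (auto simp: ivl_disj_un_two_touch)
    with 1 assms(2,4) show ?thesis
      by auto
  next
    case (2 a)
    with assms(2,3) have "i = a"
      by (simp add: order.antisym)
    with 2 assms(4) have "{u..i} \<union> K = {u..}"
      by auto
    then show ?thesis
      by simp
  qed
qed

lemma cinterval_extend_right:
  fixes K :: "'a::{linorder, order_bot} set"
  assumes "cinterval K" "j \<in> K" "\<forall>x\<in>K. x \<le> j" "j \<le> v"
  shows "cinterval (K \<union> {j..v})"
proof -
  from assms(1) consider a b where "a \<le> b" "K = {a..b}" | a where "K = {a..}"
    unfolding cinterval_iff by blast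
  then show ?thesis
  proof cases
    case (1 a b)
    with assms(2,3) have "j = b"
      by (simp add: order.antisym)
    with 1 assms(4) have "K \<union> {j..v} = {a..v}"
      by (auto simp: ivl_disj_un_two_touch)
    with 1 assms(2,4) show ?thesis
      by auto
  next
    case (2 a)
    with assms(2,4) have "K \<union> {j..v} = K"
      by auto
    with assms(1) show ?thesis
      by simp
  qed
qed

lemma fci_obtain_intervals:
  fixes A :: "'a::{linorder, order_bot} set"
  assumes "fci A"
  obtains P L where "finite P" "finite L" "A = (\<Union>(i, j)\<in>P. {i..j}) \<union> (\<Union>i\<in>L. {i..})"
proof -
  obtain F where F: "finite F" "\<forall>K\<in>F. cinterval K" "A = \<Union>F"
    using assms unfolding fci_def by blast
  define P where "P = (\<lambda>(i, j). {i..j}) -` F \<inter> {(i, j). i \<le> j}"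
  define L where "L = atLeast -` F"
  have "inj_on (\<lambda>(i, j). {i..j}) {(i::'a, j). i \<le> j}"
    by (auto simp: inj_on_def)
  then have "finite P"
    unfolding P_def using F(1) by (rule finite_vimage_IntI[rotated])
  moreover have "finite L"
    unfolding L_def using F(1) by (rule finite_vimageI) (simp add: inj_def)
  moreover have "A = (\<Union>(i, j)\<in>P. {i..j}) \<union> (\<Union>i\<in>L. {i..})"
  proof
    show "A \<subseteq> (\<Union>(i, j)\<in>P. {i..j}) \<union> (\<Union>i\<in>L. {i..})"
    proof
      fix x assume "x \<in> A"
      then obtain K where "K \<in> F" "x \<in> K"
        using F(3) by blast
      with F(2) consider i j where "i \<le> j" "K = {i..j}" | i where "K = {i..}"
        unfolding cinterval_iff by blast
      then show "x \<in> (\<Union>(i, j)\<in>P. {i..j}) \<union> (\<Union>i\<in>L. {i..})"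
      proof cases
        case (1 i j)
        then have "(i, j) \<in> P"
          using \<open>K \<in> F\<close> by (simp add: P_def)
        with 1 \<open>x \<in> K\<close> show ?thesis
          by blast
      next
        case (2 i)
        then have "i \<in> L"
          using \<open>K \<in> F\<close> by (simp add: L_def)
        with 2 \<open>x \<in> K\<close> show ?thesis
          by blast
      qed
    qed
  qed (use F(3) in \<open>auto simp: P_def L_def\<close>)
  ultimately show ?thesis
    using that by blast
qed

lemma fci_finite_left_witnesses:
  fixes A :: "'a::{linorder, order_bot} set"
  assumes "fci A"
  obtains E where "finite E" "\<And>x. x \<in> A \<Longrightarrow> \<exists>e\<in>E. e \<le> x \<and> {e..x} \<subseteq> A"
proof -
  obtain P L where P: "finite P" "finite L" "A = (\<Union>(i, j)\<in>P. {i..j}) \<union> (\<Union>i\<in>L. {i..})"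
    using assms by (rule fci_obtain_intervals)
  have "\<exists>e\<in>fst ` P \<union> L. e \<le> x \<and> {e..x} \<subseteq> A" if "x \<in> A" for x
  proof -
    from that consider i j where "(i, j) \<in> P" "x \<in> {i..j}" | i where "i \<in> L" "x \<in> {i..}"
      unfolding P(3) by blast
    then show ?thesis
    proof cases
      case (1 i j)
      then have "{i..j} \<subseteq> A" "i \<in> fst ` P"
        unfolding P(3) by force+
      with 1(2) show ?thesis
        by (metis atLeastAtMost_iff atLeastatMost_subset_iff order.refl order.trans UnI1)
    next
      case (2 i)
      then have "{i..} \<subseteq> A"
        unfolding P(3) by blast
      with 2 show ?thesis
        by (auto intro!: bexI[of _ i])
    qed
  qed
  with P(1,2) show ?thesis
    by (intro that[of "fst ` P \<union> L"]) auto
qed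

lemma fci_finite_right_witnesses:
  fixes A :: "'a::{linorder, order_bot} set"
  assumes "fci A"
  obtains E where "finite E"
    "\<And>x. x \<in> A \<Longrightarrow> (\<exists>e\<in>E. x \<le> e \<and> {x..e} \<subseteq> A) \<or> (\<exists>e\<le>x. {e..} \<subseteq> A)"
proof -
  obtain P L where P: "finite P" "finite L" "A = (\<Union>(i, j)\<in>P. {i..j}) \<union> (\<Union>i\<in>L. {i..})"
    using assms by (rule fci_obtain_intervals)
  have "(\<exists>e\<in>snd ` P. x \<le> e \<and> {x..e} \<subseteq> A) \<or> (\<exists>e\<le>x. {e..} \<subseteq> A)" if "x \<in> A" for x
  proof -
    from that consider i j where "(i, j) \<in> P" "x \<in> {i..j}" | i where "i \<in> L" "x \<in> {i..}"
      unfolding P(3) by blast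
    then show ?thesis
    proof cases
      case (1 i j)
      then have "{i..j} \<subseteq> A" "j \<in> snd ` P"
        unfolding P(3) by force+
      with 1(2) show ?thesis
        by (metis atLeastAtMost_iff atLeastatMost_subset_iff order.refl order.trans)
    next
      case (2 i)
      then have "{i..} \<subseteq> A"
        unfolding P(3) by blast
      with 2 show ?thesis
        by auto
    qed
  qed
  with P(1) show ?thesis
    by (intro that[of "snd ` P"]) auto
qed

section \<open>Endpoints of a union of closed intervals\<close>

definition left_endpoints :: "'a::linorder set \<Rightarrow> 'a set" where
  "left_endpoints A = {i\<in>A. \<forall>u<i. \<not> {u..i} \<subseteq> A}"

definition right_endpoints :: "'a::linorder set \<Rightarrow> 'a set" where
  "right_endpoints A = {j\<in>A. \<forall>v>j. \<not> {j..v} \<subseteq> A}"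

lemma not_left_endpoint:
  assumes "{a..b} \<subseteq> A" "a < c" "c \<le> b"
  shows "c \<notin> left_endpoints A"
proof -
  have "{a..c} \<subseteq> A"
    using assms by fastforce
  with \<open>a < c\<close> show ?thesis
    by (auto simp: left_endpoints_def)
qed

lemma not_right_endpoint:
  assumes "{a..b} \<subseteq> A" "a \<le> c" "c < b"
  shows "c \<notin> right_endpoints A"
proof -
  have "{c..b} \<subseteq> A"
    using assms by fastforce
  with \<open>c < b\<close> show ?thesis
    by (auto simp: right_endpoints_def)
qed

lemma left_endpoint_if_least:
  assumes "{i..a} \<subseteq> A" "i \<le> a" "\<And>x. x \<le> a \<Longrightarrow> {x..a} \<subseteq> A \<Longrightarrow> i \<le> x"
  shows "i \<in> left_endpoints A"
proof -
  have "\<not> {u..i} \<subseteq> A" if "u < i" for u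
  proof
    assume "{u..i} \<subseteq> A"
    with assms(1,2) \<open>u < i\<close> have "{u..a} \<subseteq> A"
      using atLeastAtMost_join_subset by (blast intro: less_imp_le)
    with assms(2,3) \<open>u < i\<close> show False
      by (meson leD less_imp_le order.trans)
  qed
  moreover from assms(1,2) have "i \<in> A"
    by auto
  ultimately show ?thesis
    by (simp add: left_endpoints_def)
qed

lemma right_endpoint_if_greatest:
  assumes "{a..j} \<subseteq> A" "a \<le> j" "\<And>y. a \<le> y \<Longrightarrow> {a..y} \<subseteq> A \<Longrightarrow> y \<le> j"
  shows "j \<in> right_endpoints A"
proof -
  have "\<not> {j..v} \<subseteq> A" if "j < v" for v
  proof
    assume "{j..v} \<subseteq> A"
    with assms(1,2) \<open>j < v\<close> have "{a..v} \<subseteq> A"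
      using atLeastAtMost_join_subset by (blast intro: less_imp_le)
    with assms(2,3) \<open>j < v\<close> show False
      by (meson leD less_imp_le order.trans)
  qed
  moreover from assms(1,2) have "j \<in> A"
    by auto
  ultimately show ?thesis
    by (simp add: right_endpoints_def)
qed

lemma fci_left_endpoint_below:
  fixes A :: "'a::{linorder, order_bot} set"
  assumes "fci A" "a \<in> A"
  obtains i where "i \<in> left_endpoints A" "i \<le> a" "{i..a} \<subseteq> A"
proof -
  obtain E where E: "finite E" "\<And>x. x \<in> A \<Longrightarrow> \<exists>e\<in>E. e \<le> x \<and> {e..x} \<subseteq> A"
    using fci_finite_left_witnesses[OF assms(1)] by blast
  define S where "S = {x. x \<le> a \<and> {x..a} \<subseteq> A}"
  have "\<exists>e\<in>S \<inter> E. e \<le> x" if "x \<in> S" for x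
  proof -
    from that have "x \<in> A" "{x..a} \<subseteq> A" "x \<le> a"
      by (auto simp: S_def)
    with E(2) obtain e where e: "e \<in> E" "e \<le> x" "{e..x} \<subseteq> A"
      by blast
    with \<open>{x..a} \<subseteq> A\<close> \<open>x \<le> a\<close> have "{e..a} \<subseteq> A"
      using atLeastAtMost_join_subset by blast
    with e \<open>x \<le> a\<close> show ?thesis
      by (auto simp: S_def)
  qed
  moreover have "a \<in> S"
    using assms(2) by (simp add: S_def)
  ultimately obtain i where i: "i \<in> S" "\<forall>x\<in>S. i \<le> x"
    using finite_coinitial_ex_least[OF E(1)] by blast
  then have "{i..a} \<subseteq> A" "i \<le> a"
    by (auto simp: S_def)
  moreover from this i(2) have "i \<in> left_endpoints A"
    by (intro left_endpoint_if_least) (auto simp: S_def)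
  ultimately show ?thesis
    using that by blast
qed

lemma fci_right_endpoint_above:
  fixes A :: "'a::{linorder, order_bot} set"
  assumes "fci A" "a \<in> A"
  obtains j where "j \<in> right_endpoints A" "a \<le> j" "{a..j} \<subseteq> A" | "{a..} \<subseteq> A"
proof -
  obtain E where E: "finite E"
    "\<And>x. x \<in> A \<Longrightarrow> (\<exists>e\<in>E. x \<le> e \<and> {x..e} \<subseteq> A) \<or> (\<exists>e\<le>x. {e..} \<subseteq> A)"
    using fci_finite_right_witnesses[OF assms(1)] by blast
  define T where "T = {y. a \<le> y \<and> {a..y} \<subseteq> A}"
  show ?thesis
  proof (cases "\<exists>y\<in>T. \<exists>e\<le>y. {e..} \<subseteq> A")
    case True
    then obtain y e where "a \<le> y" "{a..y} \<subseteq> A" "e \<le> y" "{e..} \<subseteq> A"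
      by (auto simp: T_def)
    then have "{a..} \<subseteq> {a..y} \<union> {e..}"
      by auto
    with \<open>{a..y} \<subseteq> A\<close> \<open>{e..} \<subseteq> A\<close> have "{a..} \<subseteq> A"
      by blast
    with that show ?thesis
      by blast
  next
    case False
    have "\<exists>e\<in>T \<inter> E. x \<le> e" if "x \<in> T" for x
    proof -
      from that have "x \<in> A" "{a..x} \<subseteq> A" "a \<le> x"
        by (auto simp: T_def)
      with E(2) False that obtain e where e: "e \<in> E" "x \<le> e" "{x..e} \<subseteq> A"
        by blast
      with \<open>{a..x} \<subseteq> A\<close> \<open>a \<le> x\<close> have "{a..e} \<subseteq> A"
        using atLeastAtMost_join_subset by blast
      with e \<open>a \<le> x\<close> show ?thesis
        by (auto simp: T_def)
    qed
    moreover have "a \<in> T"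
      using assms(2) by (simp add: T_def)
    ultimately obtain j where j: "j \<in> T" "\<forall>x\<in>T. x \<le> j"
      using finite_cofinal_ex_greatest[OF E(1)] by blast
    then have "{a..j} \<subseteq> A" "a \<le> j"
      by (auto simp: T_def)
    moreover from this j(2) have "j \<in> right_endpoints A"
      by (intro right_endpoint_if_greatest) (auto simp: T_def)
    ultimately show ?thesis
      using that by blast
  qed
qed

lemma lend_subset_left_endpoints:
  fixes A :: "'a::{linorder, order_bot} set"
  shows "lend A \<subseteq> left_endpoints A"
proof
  fix i assume "i \<in> lend A"
  then obtain K where K: "maxci A K" "i \<in> K" "\<forall>x\<in>K. i \<le> x"
    unfolding lend_def by blast
  then have "cinterval K" "K \<subseteq> A"
    by (simp_all add: maxci_def)
  have "\<not> {u..i} \<subseteq> A" if "u < i" for u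
  proof
    assume "{u..i} \<subseteq> A"
    with \<open>K \<subseteq> A\<close> have "{u..i} \<union> K \<subseteq> A"
      by blast
    moreover have "cinterval ({u..i} \<union> K)"
      using cinterval_extend_left[OF \<open>cinterval K\<close> K(2,3)] \<open>u < i\<close> by simp
    ultimately have "{u..i} \<union> K = K"
      using K(1) unfolding maxci_def by blast
    moreover from \<open>u < i\<close> have "u \<in> {u..i}"
      by simp
    ultimately have "u \<in> K"
      by blast
    with K(3) \<open>u < i\<close> show False
      by (meson leD)
  qed
  with K(2) \<open>K \<subseteq> A\<close> show "i \<in> left_endpoints A"
    unfolding left_endpoints_def by blast
qed

lemma rend_subset_right_endpoints:
  fixes A :: "'a::{linorder, order_bot} set"
  shows "rend A \<subseteq> right_endpoints A"
proof
  fix j assume "j \<in> rend A"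
  then obtain K where K: "maxci A K" "j \<in> K" "\<forall>x\<in>K. x \<le> j"
    unfolding rend_def by blast
  then have "cinterval K" "K \<subseteq> A"
    by (simp_all add: maxci_def)
  have "\<not> {j..v} \<subseteq> A" if "j < v" for v
  proof
    assume "{j..v} \<subseteq> A"
    with \<open>K \<subseteq> A\<close> have "K \<union> {j..v} \<subseteq> A"
      by blast
    moreover have "cinterval (K \<union> {j..v})"
      using cinterval_extend_right[OF \<open>cinterval K\<close> K(2,3)] \<open>j < v\<close> by simp
    ultimately have "K \<union> {j..v} = K"
      using K(1) unfolding maxci_def by blast
    moreover from \<open>j < v\<close> have "v \<in> {j..v}"
      by simp
    ultimately have "v \<in> K"
      by blast
    with K(3) \<open>j < v\<close> show False
      by (meson leD)
  qed
  with K(2) \<open>K \<subseteq> A\<close> show "j \<in> right_endpoints A"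
    unfolding right_endpoints_def by blast
qed

lemma maxci_atLeastAtMost:
  assumes "i \<in> left_endpoints A" "j \<in> right_endpoints A" "i \<le> j" "{i..j} \<subseteq> A"
  shows "maxci A {i..j}"
  unfolding maxci_def
proof (intro conjI allI impI)
  fix K assume K: "cinterval K \<and> {i..j} \<subseteq> K \<and> K \<subseteq> A"
  with assms(3) have "i \<in> K" "j \<in> K"
    by auto
  have "y \<in> {i..j}" if "y \<in> K" for y
  proof (rule ccontr)
    assume "y \<notin> {i..j}"
    then consider "y < i" | "j < y"
      by (auto simp: not_le)
    then show False
    proof cases
      case 1
      with K \<open>y \<in> K\<close> \<open>i \<in> K\<close> have "{y..i} \<subseteq> A"
        using cinterval_convex by blast
      with 1 assms(1) show False
        by (auto simp: left_endpoints_def)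
    next
      case 2
      with K \<open>y \<in> K\<close> \<open>j \<in> K\<close> have "{j..y} \<subseteq> A"
        using cinterval_convex by blast
      with 2 assms(2) show False
        by (auto simp: right_endpoints_def)
    qed
  qed
  with K show "K = {i..j}"
    by blast
qed (use assms in auto)

lemma maxci_atLeast:
  assumes "i \<in> left_endpoints A" "{i..} \<subseteq> A"
  shows "maxci A {i..}"
  unfolding maxci_def
proof (intro conjI allI impI)
  fix K assume K: "cinterval K \<and> {i..} \<subseteq> K \<and> K \<subseteq> A"
  have "i \<le> y" if "y \<in> K" for y
  proof (rule ccontr)
    assume "\<not> i \<le> y"
    with K \<open>y \<in> K\<close> have "{y..i} \<subseteq> A"
      using cinterval_convex by blast
    with \<open>\<not> i \<le> y\<close> assms(1) show False
      by (auto simp: left_endpoints_def not_le)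
  qed
  with K show "K = {i..}"
    by auto
qed (use assms in auto)

lemma lend_eq_left_endpoints:
  fixes A :: "'a::{linorder, order_bot} set"
  assumes "fci A"
  shows "lend A = left_endpoints A"
proof
  show "left_endpoints A \<subseteq> lend A"
  proof
    fix i assume i: "i \<in> left_endpoints A"
    then have "i \<in> A"
      by (simp add: left_endpoints_def)
    with assms consider (bounded) j where "j \<in> right_endpoints A" "i \<le> j" "{i..j} \<subseteq> A"
      | (unbounded) "{i..} \<subseteq> A"
      by (rule fci_right_endpoint_above)
    then show "i \<in> lend A"
    proof cases
      case bounded
      with i have "maxci A {i..j}"
        by (blast intro: maxci_atLeastAtMost)
      with \<open>i \<le> j\<close> show ?thesis
        unfolding lend_def by (intro CollectI exI[of _ "{i..j}"]) auto
    next
      case unbounded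
      with i have "maxci A {i..}"
        by (rule maxci_atLeast)
      then show ?thesis
        unfolding lend_def by (intro CollectI exI[of _ "{i..}"]) auto
    qed
  qed
qed (rule lend_subset_left_endpoints)

lemma rend_eq_right_endpoints:
  fixes A :: "'a::{linorder, order_bot} set"
  assumes "fci A"
  shows "rend A = right_endpoints A"
proof
  show "right_endpoints A \<subseteq> rend A"
  proof
    fix j assume j: "j \<in> right_endpoints A"
    then have "j \<in> A"
      by (simp add: right_endpoints_def)
    with assms obtain i where "i \<in> left_endpoints A" "i \<le> j" "{i..j} \<subseteq> A"
      by (rule fci_left_endpoint_below)
    with j have "maxci A {i..j}"
      by (blast intro: maxci_atLeastAtMost)
    with \<open>i \<le> j\<close> show "j \<in> rend A"
      unfolding rend_def by (intro CollectI exI[of _ "{i..j}"]) auto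
  qed
qed (rule rend_subset_right_endpoints)

section \<open>Necessity of the conditions\<close>

lemma left_endpoints_nonempty:
  fixes A :: "'a::{linorder, order_bot} set"
  assumes "fci A" "A \<noteq> {}"
  shows "left_endpoints A \<noteq> {}"
proof -
  from assms(2) obtain a where "a \<in> A"
    by blast
  with assms(1) obtain i where "i \<in> left_endpoints A"
    by (rule fci_left_endpoint_below)
  then show ?thesis
    by blast
qed

lemma Min_in_left_endpoints:
  fixes A :: "'a::{linorder, order_bot} set"
  assumes "fci A" "finite X" "X = left_endpoints A \<union> right_endpoints A" "X \<noteq> {}"
  shows "Min X \<in> left_endpoints A"
proof -
  have "Min X \<in> A"
    using Min_in[OF assms(2,4)] assms(3) by (auto simp: left_endpoints_def right_endpoints_def)
  with assms(1) obtain i where "i \<in> left_endpoints A" "i \<le> Min X"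
    by (rule fci_left_endpoint_below)
  moreover from this have "Min X \<le> i"
    using assms(2,3) by simp
  ultimately show ?thesis
    by (metis order.antisym)
qed

lemma succ_in_endpoints:
  assumes "{x..j} \<subseteq> A" "x < j" "x \<in> X" "j \<in> X" "X = left_endpoints A \<union> right_endpoints A"
  shows "succ_in X x j"
  unfolding succ_in_def
proof (intro conjI ballI impI)
  fix k assume "k \<in> X" "x < k"
  show "j \<le> k"
  proof (rule ccontr)
    assume "\<not> j \<le> k"
    then have "k < j"
      by simp
    with assms(1) \<open>x < k\<close> have "k \<notin> left_endpoints A" "k \<notin> right_endpoints A"
      using not_left_endpoint[of x j A k] not_right_endpoint[of x j A k] by simp_all
    with \<open>k \<in> X\<close> assms(5) show False
      by blast
  qed
qed (use assms in auto)

lemma ips_endpoints_subset: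
  fixes A :: "'a::{linorder, order_bot} set"
  assumes "fci A" "finite X"
  defines "L \<equiv> left_endpoints A" and "R \<equiv> right_endpoints A"
  assumes X: "X = L \<union> R"
  shows "ips X (R - L) \<subseteq> L - R - {Max X}"
proof
  have RA: "R \<subseteq> A"
    by (auto simp: R_def right_endpoints_def)
  fix x assume "x \<in> ips X (R - L)"
  then obtain y where y: "succ_in X x y" "y \<in> R - L"
    unfolding ips_def by blast
  then have "x \<in> X" "y \<in> X" "x < y" and between: "\<forall>k\<in>X. x < k \<longrightarrow> y \<le> k"
    by (auto simp: succ_in_def)
  from y(2) RA have "y \<in> A"
    by blast
  with assms(1) obtain i where i: "i \<in> L" "i \<le> y" "{i..y} \<subseteq> A"
    unfolding L_def by (rule fci_left_endpoint_below)
  from i(1) y(2) have "i \<noteq> y"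
    by blast
  with i(2) have "i < y"
    by simp
  have "i \<le> x"
  proof (rule ccontr)
    assume "\<not> i \<le> x"
    with between i(1) X have "y \<le> i"
      by simp
    with \<open>i < y\<close> show False
      by simp
  qed
  then have "{x..y} \<subseteq> {i..y}"
    by auto
  with i(3) have "{x..y} \<subseteq> A"
    by blast
  then have "x \<notin> R"
    unfolding R_def using \<open>x < y\<close> by (rule not_right_endpoint[OF _ order.refl])
  moreover have "x \<noteq> Max X"
    using Max_ge[OF assms(2) \<open>y \<in> X\<close>] \<open>x < y\<close> by auto
  ultimately show "x \<in> L - R - {Max X}"
    using \<open>x \<in> X\<close> X by blast
qed

lemma subset_ips_endpoints:
  fixes A :: "'a::{linorder, order_bot, no_top} set"
  assumes "fci A" "finite X"
  defines "L \<equiv> left_endpoints A" and "R \<equiv> right_endpoints A"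
  assumes X: "X = L \<union> R"
  shows "L - R - {Max X} \<subseteq> ips X (R - L)"
proof
  have LA: "L \<subseteq> A"
    by (auto simp: L_def left_endpoints_def)
  fix x assume x: "x \<in> L - R - {Max X}"
  with LA X have "x \<in> A" "x \<in> X"
    by auto
  from assms(1) \<open>x \<in> A\<close> consider (bounded) j where "j \<in> R" "x \<le> j" "{x..j} \<subseteq> A"
    | (unbounded) "{x..} \<subseteq> A"
    unfolding R_def by (rule fci_right_endpoint_above)
  then show "x \<in> ips X (R - L)"
  proof cases
    case bounded
    from x bounded(1) have "x \<noteq> j"
      by blast
    with bounded(2) have "x < j"
      by simp
    have "j \<notin> L"
      unfolding L_def using not_left_endpoint[OF bounded(3) \<open>x < j\<close>] by simp
    have "succ_in X x j"
      using bounded(1,3) \<open>x < j\<close> \<open>x \<in> X\<close> X unfolding L_def R_def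
      by (intro succ_in_endpoints) auto
    with bounded(1) \<open>j \<notin> L\<close> \<open>x \<in> X\<close> show ?thesis
      unfolding ips_def by blast
  next
    case unbounded
    define M where "M = Max X"
    have "M \<in> X" "x < M"
      using Max_in[OF assms(2)] Max_ge[OF assms(2) \<open>x \<in> X\<close>] x \<open>x \<in> X\<close>
      unfolding M_def by auto
    obtain w where "M < w"
      using gt_ex by blast
    have "{x..w} \<subseteq> {x..}"
      by auto
    with unbounded have "{x..w} \<subseteq> A"
      by blast
    then have "M \<notin> L" "M \<notin> R"
      unfolding L_def R_def
      using not_left_endpoint[of x w A M] not_right_endpoint[of x w A M] \<open>x < M\<close> \<open>M < w\<close>
      by simp_all
    with \<open>M \<in> X\<close> X show ?thesis
      by blast
  qed
qed

lemma fci_endpoints_conditions: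
  fixes A :: "'a::{linorder, order_bot, no_top} set"
  assumes "fci A" "A \<noteq> {}" "lend A = B" "rend A = C" "finite B" "finite C"
  shows "B \<noteq> {} \<and> Min (B \<union> C) \<in> B \<and> ips (B \<union> C) (C - B) = B - C - {Max (B \<union> C)}"
proof -
  have L: "left_endpoints A = B" and R: "right_endpoints A = C"
    using lend_eq_left_endpoints[OF assms(1)] rend_eq_right_endpoints[OF assms(1)] assms(3,4)
    by simp_all
  then have "B \<noteq> {}"
    using left_endpoints_nonempty[OF assms(1,2)] by simp
  have "finite (B \<union> C)" "B \<union> C \<noteq> {}" and X: "B \<union> C = left_endpoints A \<union> right_endpoints A"
    using assms(5,6) \<open>B \<noteq> {}\<close> L R by simp_all
  have "Min (B \<union> C) \<in> B"
    using Min_in_left_endpoints[OF assms(1) \<open>finite (B \<union> C)\<close> X \<open>B \<union> C \<noteq> {}\<close>] L by simp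
  moreover have "ips (B \<union> C) (C - B) = B - C - {Max (B \<union> C)}"
    using ips_endpoints_subset[OF assms(1) \<open>finite (B \<union> C)\<close> X]
      subset_ips_endpoints[OF assms(1) \<open>finite (B \<union> C)\<close> X] L R
    by auto
  ultimately show ?thesis
    using \<open>B \<noteq> {}\<close> by blast
qed

section \<open>Realizing admissible endpoint sets\<close>

definition block :: "'a::linorder set \<Rightarrow> 'a set \<Rightarrow> 'a \<Rightarrow> 'a set" where
  "block X C x = {z. x \<le> z \<and> (x \<in> C \<longrightarrow> z = x) \<and> (\<forall>k\<in>X. x < k \<longrightarrow> z \<le> k)}"

lemma cinterval_block:
  fixes X :: "'a::linorder set"
  assumes "finite X"
  shows "cinterval (block X C x)"
proof (cases "x \<in> C")
  case True
  then have "block X C x = {x..x}"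
    by (auto simp: block_def)
  then show ?thesis
    using cinterval_atLeastAtMost[OF order.refl] by metis
next
  case False
  show ?thesis
  proof (cases "\<exists>k\<in>X. x < k")
    case True
    let ?n = "Min {k\<in>X. x < k}"
    have "finite {k\<in>X. x < k}" "{k\<in>X. x < k} \<noteq> {}"
      using assms True by auto
    then have "x < ?n" "\<forall>k\<in>X. x < k \<longrightarrow> ?n \<le> k" "\<forall>z. (\<forall>k\<in>X. x < k \<longrightarrow> z \<le> k) \<longleftrightarrow> z \<le> ?n"
      by (auto simp: Min_gr_iff Min_ge_iff)
    with False have "block X C x = {x..?n}"
      by (auto simp: block_def)
    with \<open>x < ?n\<close> show ?thesis
      by simp
  next
    case no_greater: False
    with False have "block X C x = {x..}"
      by (auto simp: block_def not_less)
    then show ?thesis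
      by simp
  qed
qed

lemma block_eq_singleton: "x \<in> C \<Longrightarrow> block X C x = {x}"
  by (auto simp: block_def)

lemma block_eq_atLeastAtMost_succ:
  assumes "x \<notin> C" "succ_in X x y"
  shows "block X C x = {x..y}"
  using assms by (auto simp: block_def succ_in_def intro: order.trans)

lemma block_eq_atLeast: "x \<notin> C \<Longrightarrow> \<forall>k\<in>X. k \<le> x \<Longrightarrow> block X C x = {x..}"
  by (auto simp: block_def not_le[symmetric])

lemma atLeastAtMost_subset_block:
  assumes "z \<in> block X C x"
  shows "{x..z} \<subseteq> block X C x"
proof
  fix w assume "w \<in> {x..z}"
  with assms show "w \<in> block X C x"
    by (simp add: block_def) (meson order.antisym order.trans)
qed

definition endpoint_realization :: "'a::linorder set \<Rightarrow> 'a set \<Rightarrow> 'a set" where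
  "endpoint_realization B C = (\<Union>x\<in>B. block (B \<union> C) C x)"

context
  fixes B C :: "'a::{dense_linorder, no_top} set"
  assumes finite_B: "finite B" and finite_C: "finite C"
    and Min_in: "Min (B \<union> C) \<in> B"
    and ips_eq: "ips (B \<union> C) (C - B) = B - C - {Max (B \<union> C)}"
begin

private lemma finite_Un: "finite (B \<union> C)"
  using finite_B finite_C by simp

lemma succ_in_of_left_not_right:
  assumes "x \<in> B - C" "k \<in> B \<union> C" "x < k"
  obtains y where "succ_in (B \<union> C) x y" "y \<in> C - B"
proof -
  have "k \<le> Max (B \<union> C)"
    using finite_Un assms(2) by (rule Max_ge)
  with assms(3) have "x \<noteq> Max (B \<union> C)"
    by auto
  with assms(1) have "x \<in> ips (B \<union> C) (C - B)"
    using ips_eq by blast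
  with that show ?thesis
    unfolding ips_def by blast
qed

lemma succ_in_to_right_not_left:
  assumes "y \<in> C - B"
  obtains x where "succ_in (B \<union> C) x y" "x \<in> B - C"
proof -
  have "y \<in> B \<union> C"
    using assms by blast
  then have "Min (B \<union> C) \<le> y"
    using finite_Un by simp
  moreover have "Min (B \<union> C) \<noteq> y"
    using assms Min_in by blast
  ultimately have "Min (B \<union> C) < y"
    by simp
  then obtain x where "succ_in (B \<union> C) x y"
    using ex_succ_in_pred[OF finite_Un \<open>y \<in> B \<union> C\<close> _ \<open>Min (B \<union> C) < y\<close>] Min_in by blast
  then have "x \<in> B \<union> C"
    by (simp add: succ_in_def)
  with \<open>succ_in (B \<union> C) x y\<close> assms have "x \<in> ips (B \<union> C) (C - B)"
    unfolding ips_def by blast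
  with ips_eq have "x \<in> B - C"
    by blast
  with \<open>succ_in (B \<union> C) x y\<close> show ?thesis
    by (rule that)
qed

lemma fci_endpoint_realization: "fci (endpoint_realization B C)"
  unfolding fci_def endpoint_realization_def
  by (intro exI[of _ "block (B \<union> C) C ` B"]) (simp add: finite_B cinterval_block[OF finite_Un])

lemma endpoint_realization_nonempty: "endpoint_realization B C \<noteq> {}"
proof -
  have "Min (B \<union> C) \<in> block (B \<union> C) C (Min (B \<union> C))"
    by (simp add: block_def less_imp_le)
  with Min_in show ?thesis
    by (auto simp: endpoint_realization_def)
qed

lemma Un_subset_endpoint_realization: "B \<union> C \<subseteq> endpoint_realization B C"
proof
  fix j assume "j \<in> B \<union> C"
  show "j \<in> endpoint_realization B C"
  proof (cases "j \<in> B")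
    case True
    then show ?thesis
      by (auto simp: endpoint_realization_def block_def)
  next
    case False
    with \<open>j \<in> B \<union> C\<close> obtain x where "succ_in (B \<union> C) x j" "x \<in> B - C"
      by (meson DiffI UnE succ_in_to_right_not_left)
    then have "j \<in> block (B \<union> C) C x"
      by (simp add: block_eq_atLeastAtMost_succ succ_in_def less_imp_le)
    with \<open>x \<in> B - C\<close> show ?thesis
      by (auto simp: endpoint_realization_def)
  qed
qed

lemma left_endpoints_endpoint_realization_subset: "left_endpoints (endpoint_realization B C) \<subseteq> B"
proof
  fix i assume i: "i \<in> left_endpoints (endpoint_realization B C)"
  then obtain x where "x \<in> B" "i \<in> block (B \<union> C) C x"
    by (auto simp: left_endpoints_def endpoint_realization_def)
  then have "{x..i} \<subseteq> endpoint_realization B C" "x \<le> i"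
    using atLeastAtMost_subset_block[of i "B \<union> C" C x]
    by (auto simp: endpoint_realization_def block_def)
  with i have "\<not> x < i"
    using not_left_endpoint[OF _ _ order.refl] by blast
  with \<open>x \<le> i\<close> \<open>x \<in> B\<close> show "i \<in> B"
    by (metis order.not_eq_order_implies_strict)
qed

lemma left_endpoint_endpoint_realization:
  assumes "x \<in> B"
  shows "x \<in> left_endpoints (endpoint_realization B C)"
proof -
  have "\<not> {u..x} \<subseteq> endpoint_realization B C" if "u < x" for u
  proof
    assume "{u..x} \<subseteq> endpoint_realization B C"
    obtain z where z: "u < z" "z < x" and gap: "\<forall>k\<in>B \<union> C. k < x \<longrightarrow> k < z"
      using finite_gap_below[OF finite_Un \<open>u < x\<close>] by blast
    then have "z \<in> {u..x}"
      by (simp add: less_imp_le)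
    with \<open>{u..x} \<subseteq> endpoint_realization B C\<close> obtain x' where "x' \<in> B"
      and z_block: "z \<in> block (B \<union> C) C x'"
      by (auto simp: endpoint_realization_def)
    then have "x' \<le> z"
      by (simp add: block_def)
    with z(2) \<open>x' \<in> B\<close> gap have "x' < z"
      by (meson UnI1 order.strict_trans1)
    with z_block have "x' \<notin> C"
      by (auto simp: block_def)
    from \<open>x' \<le> z\<close> z(2) have "x' < x"
      by simp
    have "x' \<in> B - C" "x \<in> B \<union> C"
      using \<open>x' \<in> B\<close> \<open>x' \<notin> C\<close> assms by auto
    then obtain y where y: "succ_in (B \<union> C) x' y" "y \<in> C - B"
      using \<open>x' < x\<close> by (rule succ_in_of_left_not_right)
    then have "y \<in> B \<union> C" "x' < y" "y \<le> x"
      using \<open>x \<in> B \<union> C\<close> \<open>x' < x\<close> by (auto simp: succ_in_def)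
    from z_block \<open>y \<in> B \<union> C\<close> \<open>x' < y\<close> have "z \<le> y"
      by (simp add: block_def)
    with gap \<open>y \<in> B \<union> C\<close> have "\<not> y < x"
      by (meson leD)
    with \<open>y \<le> x\<close> y(2) assms show False
      by (metis DiffD2 order.not_eq_order_implies_strict)
  qed
  moreover have "x \<in> endpoint_realization B C"
    using assms Un_subset_endpoint_realization by blast
  ultimately show ?thesis
    by (simp add: left_endpoints_def)
qed

lemma right_endpoints_endpoint_realization_subset: "right_endpoints (endpoint_realization B C) \<subseteq> C"
proof
  fix j assume j: "j \<in> right_endpoints (endpoint_realization B C)"
  then obtain x where "x \<in> B" and j_block: "j \<in> block (B \<union> C) C x"
    by (auto simp: right_endpoints_def endpoint_realization_def)
  then have block_subset: "block (B \<union> C) C x \<subseteq> endpoint_realization B C"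
    by (auto simp: endpoint_realization_def)
  show "j \<in> C"
  proof (cases "x \<in> C")
    case True
    with j_block show ?thesis
      by (simp add: block_eq_singleton)
  next
    case False
    show ?thesis
    proof (cases "\<exists>k\<in>B \<union> C. x < k")
      case True
      with \<open>x \<in> B\<close> False obtain y where y: "succ_in (B \<union> C) x y" "y \<in> C - B"
        by (meson DiffI succ_in_of_left_not_right)
      with False j_block block_subset have "j \<in> {x..y}" "{x..y} \<subseteq> endpoint_realization B C"
        by (simp_all add: block_eq_atLeastAtMost_succ)
      with j have "\<not> j < y"
        using not_right_endpoint[of x y "endpoint_realization B C" j] by auto
      with \<open>j \<in> {x..y}\<close> y(2) show ?thesis
        by (metis DiffD1 atLeastAtMost_iff order.not_eq_order_implies_strict)
    next
      case no_greater: False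
      obtain w where "j < w"
        using gt_ex by blast
      from False no_greater j_block block_subset
      have "j \<in> {x..}" "{x..w} \<subseteq> endpoint_realization B C"
        by (auto simp: block_eq_atLeast not_less)
      with j \<open>j < w\<close> show ?thesis
        using not_right_endpoint[of x w _ j] by simp
    qed
  qed
qed

lemma right_endpoint_endpoint_realization:
  assumes "j \<in> C"
  shows "j \<in> right_endpoints (endpoint_realization B C)"
proof -
  have "\<not> {j..v} \<subseteq> endpoint_realization B C" if "j < v" for v
  proof
    assume "{j..v} \<subseteq> endpoint_realization B C"
    obtain z where z: "j < z" "z < v" and gap: "\<forall>k\<in>B \<union> C. j < k \<longrightarrow> z < k"
      using finite_gap_above[OF finite_Un \<open>j < v\<close>] by blast
    then have "z \<in> {j..v}"
      by (simp add: less_imp_le)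
    with \<open>{j..v} \<subseteq> endpoint_realization B C\<close> obtain x' where "x' \<in> B"
      and z_block: "z \<in> block (B \<union> C) C x'"
      by (auto simp: endpoint_realization_def)
    consider "x' < j" | "x' = j" | "j < x'"
      by (rule linorder_cases)
    then show False
    proof cases
      case 1
      with z_block assms have "z \<le> j"
        by (simp add: block_def)
      with z(1) show False
        by simp
    next
      case 2
      with z_block assms have "z = j"
        by (simp add: block_def)
      with z(1) show False
        by simp
    next
      case 3
      with gap \<open>x' \<in> B\<close> have "z < x'"
        by blast
      moreover from z_block have "x' \<le> z"
        by (simp add: block_def)
      ultimately show False
        by (meson leD)
    qed
  qed
  moreover have "j \<in> endpoint_realization B C"
    using assms Un_subset_endpoint_realization by blast
  ultimately show ?thesis
    by (simp add: right_endpoints_def)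
qed

lemma left_endpoints_endpoint_realization: "left_endpoints (endpoint_realization B C) = B"
  using left_endpoints_endpoint_realization_subset left_endpoint_endpoint_realization by blast

lemma right_endpoints_endpoint_realization: "right_endpoints (endpoint_realization B C) = C"
  using right_endpoints_endpoint_realization_subset right_endpoint_endpoint_realization by blast

end

lemma ex_fci_with_endpoints:
  fixes B C :: "'a::{dense_linorder, order_bot, no_top} set"
  assumes "finite B" "finite C" "Min (B \<union> C) \<in> B"
    and "ips (B \<union> C) (C - B) = B - C - {Max (B \<union> C)}"
  shows "\<exists>A. fci A \<and> A \<noteq> {} \<and> lend A = B \<and> rend A = C"
proof (intro exI conjI)
  let ?A = "endpoint_realization B C"
  show "fci ?A"
    using assms by (rule fci_endpoint_realization)
  show "?A \<noteq> {}"
    using assms by (rule endpoint_realization_nonempty)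
  show "lend ?A = B"
    using lend_eq_left_endpoints[OF \<open>fci ?A\<close>] left_endpoints_endpoint_realization[OF assms] by simp
  show "rend ?A = C"
    using rend_eq_right_endpoints[OF \<open>fci ?A\<close>] right_endpoints_endpoint_realization[OF assms] by simp
qed

section \<open>Characterization of the endpoint sets\<close>

lemma ex_fci_with_endpoints_iff:
  fixes B C :: "'a::{dense_linorder, order_bot, no_top} set"
  assumes "finite B" and "finite C"
  shows "(\<exists>A. fci A \<and> A \<noteq> {} \<and> lend A = B \<and> rend A = C) \<longleftrightarrow>
    B \<noteq> {} \<and> Min (B \<union> C) \<in> B \<and> ips (B \<union> C) (C - B) = B - C - {Max (B \<union> C)}"
proof
  assume "\<exists>A. fci A \<and> A \<noteq> {} \<and> lend A = B \<and> rend A = C"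
  then obtain A where "fci A" "A \<noteq> {}" "lend A = B" "rend A = C"
    by blast
  then show "B \<noteq> {} \<and> Min (B \<union> C) \<in> B \<and> ips (B \<union> C) (C - B) = B - C - {Max (B \<union> C)}"
    using assms by (rule fci_endpoints_conditions)
next
  assume "B \<noteq> {} \<and> Min (B \<union> C) \<in> B \<and> ips (B \<union> C) (C - B) = B - C - {Max (B \<union> C)}"
  then have "Min (B \<union> C) \<in> B" "ips (B \<union> C) (C - B) = B - C - {Max (B \<union> C)}"
    by blast+
  then show "\<exists>A. fci A \<and> A \<noteq> {} \<and> lend A = B \<and> rend A = C"
    by (rule ex_fci_with_endpoints[OF assms])
qed

lemma ips_condition_iff:
  fixes B C :: "'a::linorder set"
  assumes "finite (B \<union> C)" "B \<union> C \<noteq> {}"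
  shows "(({Max (B \<union> C)} \<subseteq> C \<and> ips (B \<union> C) (C - B) = B - C) \<or>
          ({Max (B \<union> C)} \<subseteq> B - C \<and> ips (B \<union> C) (C - B) \<union> {Max (B \<union> C)} = B - C))
         \<longleftrightarrow> ips (B \<union> C) (C - B) = B - C - {Max (B \<union> C)}"
proof -
  let ?M = "Max (B \<union> C)" and ?I = "ips (B \<union> C) (C - B)"
  have "?M \<notin> ?I"
    using assms(1) by (rule Max_notin_ips)
  show ?thesis
  proof (cases "?M \<in> C")
    case True
    then have "B - C - {?M} = B - C"
      by blast
    with True show ?thesis
      by simp
  next
    case False
    with Max_in[OF assms] have "?M \<in> B - C"
      by blast
    with \<open>?M \<notin> ?I\<close> have "?I \<union> {?M} = B - C \<longleftrightarrow> ?I = B - C - {?M}"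
      by (metis Diff_insert_absorb insert_Diff insert_is_Un sup_commute)
    with False \<open>?M \<in> B - C\<close> show ?thesis
      by simp
  qed
qed

theorem lemma6p1:
  fixes B C :: "'a::{dense_linorder, order_bot, no_top} set"
  assumes "finite B" and "finite C"
  shows "(\<exists>A. fci A \<and> A \<noteq> {} \<and> lend A = B \<and> rend A = C) \<longleftrightarrow>
         (B \<noteq> {} \<and> {Min (B \<union> C)} \<subseteq> B \<and>
          (({Max (B \<union> C)} \<subseteq> C \<and> ips (B \<union> C) (C - B) = B - C) \<or>
           ({Max (B \<union> C)} \<subseteq> B - C \<and> ips (B \<union> C) (C - B) \<union> {Max (B \<union> C)} = B - C)))"
proof (cases "B = {}")
  case True
  with ex_fci_with_endpoints_iff[OF assms] show ?thesis
    by simp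
next
  case False
  then have "finite (B \<union> C)" "B \<union> C \<noteq> {}"
    using assms by simp_all
  with ex_fci_with_endpoints_iff[OF assms] show ?thesis
    unfolding ips_condition_iff[OF \<open>finite (B \<union> C)\<close> \<open>B \<union> C \<noteq> {}\<close>] by simp
qed

end
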